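(* Let $1\le p<\infty$, $N\ge2$, and let $T_1,\dots,T_N$ be unilateral pseudo-shifts $T_i=T_{f_i,\omega^{(i)}}$ on $\ell^p(\mathbb{N})$. Then $T_1,\dots,T_N$ are d-hypercyclic if and only if they possess a dense d-hypercyclic manifold.
   Context: $\{e_m\}$ is the canonical basis of $\ell^p(\mathbb{N})$ over $\mathbb{K}\in\{\mathbb{R},\mathbb{C}\}$. For a strictly increasing $f:\mathbb{N}\to\mathbb{N}$ with $f(1)>1$ and a bounded, nonzero sequence of scalars $\omega=(w_{f(m)})_{m\in\mathbb{N}}$, the unilateral pseudo-shift is $T_{f,\omega}(\sum_m\alpha_me_m)=\sum_mw_{f(m)}\alpha_{f(m)}e_m$. Operators $T_1,\dots,T_N$ on $X$ are d-hypercyclic if some $x$ (a d-hypercyclic vector) has $\{(T_1^nx,\dots,T_N^nx):n\ge0\}$ dense in $\oplus_{i=1}^NX$; a dense d-hypercyclic manifold is a dense linear subspace whose nonzero vectors are all d-hypercyclic vectors. *)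

theory Defs
  imports "HOL-Analysis.Analysis"
begin

text \<open>Sequences are indexed by nat starting at 0 (index m here corresponds to m+1 in the paper).
  The scalar field is a complete real normed field, i.e. (up to isometric isomorphism) R or C.\<close>

definition lp_space :: "real \<Rightarrow> (nat \<Rightarrow> 'a::real_normed_field) set" where
  "lp_space p = {x. summable (\<lambda>m. norm (x m) powr p)}"

definition lp_norm :: "real \<Rightarrow> (nat \<Rightarrow> 'a::real_normed_field) \<Rightarrow> real" where
  "lp_norm p x = (\<Sum>m. norm (x m) powr p) powr (1 / p)"

definition pseudo_shift :: "(nat \<Rightarrow> nat) \<Rightarrow> (nat \<Rightarrow> 'a::real_normed_field)
    \<Rightarrow> (nat \<Rightarrow> 'a) \<Rightarrow> (nat \<Rightarrow> 'a)" where
  "pseudo_shift f w x = (\<lambda>m. w (f m) * x (f m))"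

definition pseudo_shift_data :: "(nat \<Rightarrow> nat) \<Rightarrow> (nat \<Rightarrow> 'a::real_normed_field) \<Rightarrow> bool" where
  "pseudo_shift_data f w \<longleftrightarrow> strict_mono f \<and> f 0 > 0 \<and>
     bounded (range (\<lambda>m. w (f m))) \<and> (\<forall>m. w (f m) \<noteq> 0)"

text \<open>x is a d-hypercyclic vector for T_0,...,T_{N-1} on l^p: the orbit
  {(T_0^n x, ..., T_{N-1}^n x) : n} is dense in the N-fold direct sum of l^p
  (product topology = max of the l^p distances).\<close>
definition d_hypercyclic_vector ::
  "real \<Rightarrow> nat \<Rightarrow> (nat \<Rightarrow> (nat \<Rightarrow> 'a::real_normed_field) \<Rightarrow> (nat \<Rightarrow> 'a)) \<Rightarrow> (nat \<Rightarrow> 'a) \<Rightarrow> bool" where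
  "d_hypercyclic_vector p N T x \<longleftrightarrow> x \<in> lp_space p \<and>
     (\<forall>y. (\<forall>i<N. y i \<in> lp_space p) \<longrightarrow>
        (\<forall>\<epsilon>>0. \<exists>n. \<forall>i<N. lp_norm p (\<lambda>m. (T i ^^ n) x m - y i m) < \<epsilon>))"

definition d_hypercyclic :: "real \<Rightarrow> nat \<Rightarrow> (nat \<Rightarrow> (nat \<Rightarrow> 'a::real_normed_field) \<Rightarrow> (nat \<Rightarrow> 'a)) \<Rightarrow> bool" where
  "d_hypercyclic p N T \<longleftrightarrow> (\<exists>x. d_hypercyclic_vector p N T x)"

definition dense_d_hypercyclic_manifold ::
  "real \<Rightarrow> nat \<Rightarrow> (nat \<Rightarrow> (nat \<Rightarrow> 'a::real_normed_field) \<Rightarrow> (nat \<Rightarrow> 'a)) \<Rightarrow> (nat \<Rightarrow> 'a) set \<Rightarrow> bool" where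
  "dense_d_hypercyclic_manifold p N T M \<longleftrightarrow>
     M \<subseteq> lp_space p \<and> (\<lambda>m. 0) \<in> M \<and>
     (\<forall>x\<in>M. \<forall>y\<in>M. (\<lambda>m. x m + y m) \<in> M) \<and>
     (\<forall>c. \<forall>x\<in>M. (\<lambda>m. c * x m) \<in> M) \<and>
     (\<forall>y\<in>lp_space p. \<forall>\<epsilon>>0. \<exists>x\<in>M. lp_norm p (\<lambda>m. x m - y m) < \<epsilon>) \<and>
     (\<forall>x\<in>M. x \<noteq> (\<lambda>m. 0) \<longrightarrow> d_hypercyclic_vector p N T x)"

end

theory Submission
  imports Defs
begin

text \<open>
  Fix a d-hypercyclic vector x. Enumerate all triples (j, J, r) as stages s and choose times
  n_0 < n_1 < ... such that at stage s every T_i^(n_s) x is 1/(r+1)-close to a finite truncation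
  of T_i^J x, while the maps f_i^(n_s) send the support of that truncation into a block B_s of
  coordinates, the blocks being pairwise disjoint. The manifold is spanned by the vectors
  g_j = e_k + x * 1_(U_j), where k is the first component of j under prod_decode and U_j is the
  union of the blocks of the stages serving j. If v = sum a_j g_j has a_j \<noteq> 0, then at the time
  of a late stage serving (j, J, r) the unit vectors have been shifted away and
  T_i^(n_s) v is close to a_j T_i^J x; since x is d-hypercyclic, such points approximate every
  target. Density holds because the x-parts of the generators with large index live far out,
  where x is small.

  All estimates use sum |u_m|^p and the quasi-triangle inequality (a + b)^p \<le> 2^p (a^p + b^p).
\<close>

section \<open>Sums of \<open>p\<close>-th powers\<close>

definition lp_sum :: "real \<Rightarrow> (nat \<Rightarrow> 'a::real_normed_field) \<Rightarrow> real" where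
  "lp_sum p u = (\<Sum>m. norm (u m) powr p)"

lemma lp_space_iff: "u \<in> lp_space p \<longleftrightarrow> summable (\<lambda>m. norm (u m) powr p)"
  by (simp add: lp_space_def)

lemma lp_sum_nonneg: "u \<in> lp_space p \<Longrightarrow> 0 \<le> lp_sum p u"
  unfolding lp_sum_def lp_space_iff by (rule suminf_nonneg) auto

lemma lp_norm_less_iff:
  assumes "u \<in> lp_space p" "0 < \<epsilon>" "0 < p"
  shows "lp_norm p u < \<epsilon> \<longleftrightarrow> lp_sum p u < \<epsilon> powr p"
proof -
  have S: "0 \<le> lp_sum p u" using lp_sum_nonneg[OF assms(1)] .
  have norm_eq: "lp_norm p u = lp_sum p u powr (1/p)"
    by (simp add: lp_norm_def lp_sum_def)
  have eps_eq: "\<epsilon> = (\<epsilon> powr p) powr (1/p)"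
    using assms by (simp add: powr_powr)
  show ?thesis
  proof
    assume "lp_norm p u < \<epsilon>"
    then have "(lp_sum p u powr (1/p)) powr p < \<epsilon> powr p"
      unfolding norm_eq using assms by (intro powr_less_mono2) auto
    then show "lp_sum p u < \<epsilon> powr p"
      using S assms by (simp add: powr_powr)
  next
    assume "lp_sum p u < \<epsilon> powr p"
    then have "lp_sum p u powr (1/p) < (\<epsilon> powr p) powr (1/p)"
      using S assms by (intro powr_less_mono2) auto
    then show "lp_norm p u < \<epsilon>"
      using eps_eq norm_eq by simp
  qed
qed

lemma lp_sum_le_suminf:
  assumes "summable g" "\<And>m. norm (u m) powr p \<le> g m"
  shows "u \<in> lp_space p" "lp_sum p u \<le> suminf g"
proof -
  show u: "u \<in> lp_space p"
    unfolding lp_space_iff by (rule summable_comparison_test'[OF assms(1)]) (use assms(2) in auto)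
  show "lp_sum p u \<le> suminf g"
    unfolding lp_sum_def by (rule suminf_le) (use assms u[unfolded lp_space_iff] in auto)
qed

lemma lp_sum_dominated:
  assumes v: "v \<in> lp_space p" and "0 < p" "0 \<le> C"
    and "\<And>m. norm (u m) \<le> C * norm (v m)"
  shows "u \<in> lp_space p" "lp_sum p u \<le> C powr p * lp_sum p v"
proof -
  have bound: "norm (u m) powr p \<le> C powr p * norm (v m) powr p" for m
  proof -
    have "norm (u m) powr p \<le> (C * norm (v m)) powr p"
      using assms by (intro powr_mono2) auto
    then show ?thesis
      using assms by (simp add: powr_mult)
  qed
  have sums: "summable (\<lambda>m. C powr p * norm (v m) powr p)"
    using v by (simp add: lp_space_iff summable_mult)
  show "u \<in> lp_space p"
    by (rule lp_sum_le_suminf(1)[OF sums bound])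
  show "lp_sum p u \<le> C powr p * lp_sum p v"
    using lp_sum_le_suminf(2)[OF sums bound] v
    by (simp add: lp_sum_def lp_space_iff suminf_mult)
qed

lemma powr_add_le_two_powr:
  fixes a b p :: real
  assumes "0 \<le> a" "0 \<le> b" "0 < p"
  shows "(a + b) powr p \<le> 2 powr p * (a powr p + b powr p)"
proof -
  have "(a + b) powr p \<le> (2 * max a b) powr p"
    using assms by (intro powr_mono2) auto
  also have "\<dots> = 2 powr p * max a b powr p"
    using assms by (simp add: powr_mult)
  also have "\<dots> \<le> 2 powr p * (a powr p + b powr p)"
    by (intro mult_left_mono) (auto simp: max_def)
  finally show ?thesis .
qed

lemma lp_sum_triangle_scaled:
  assumes u: "u \<in> lp_space p" and v: "v \<in> lp_space p" and p: "0 < p" and C: "0 \<le> C"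
    and le: "\<And>m. norm (z m) \<le> C * (norm (u m) + norm (v m))"
  shows "z \<in> lp_space p" "lp_sum p z \<le> (2 * C) powr p * (lp_sum p u + lp_sum p v)"
proof -
  have bound: "norm (z m) powr p \<le> (2 * C) powr p * (norm (u m) powr p + norm (v m) powr p)" for m
  proof -
    have "norm (z m) powr p \<le> (C * (norm (u m) + norm (v m))) powr p"
      using le p C by (intro powr_mono2) auto
    also have "\<dots> = C powr p * (norm (u m) + norm (v m)) powr p"
      using C by (simp add: powr_mult)
    also have "\<dots> \<le> C powr p * (2 powr p * (norm (u m) powr p + norm (v m) powr p))"
      using p by (intro mult_left_mono powr_add_le_two_powr) auto
    finally show ?thesis
      using C by (simp add: powr_mult mult_ac)
  qed
  have sums: "summable (\<lambda>m. (2 * C) powr p * (norm (u m) powr p + norm (v m) powr p))"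
    using u v by (simp add: lp_space_iff summable_mult summable_add)
  show "z \<in> lp_space p"
    by (rule lp_sum_le_suminf(1)[OF sums bound])
  show "lp_sum p z \<le> (2 * C) powr p * (lp_sum p u + lp_sum p v)"
    using lp_sum_le_suminf(2)[OF sums bound] u v
    by (simp add: lp_sum_def lp_space_iff suminf_add suminf_mult summable_add)
qed

lemma lp_sum_triangle:
  assumes "u \<in> lp_space p" "v \<in> lp_space p" "0 < p"
    and "\<And>m. norm (z m) \<le> norm (u m) + norm (v m)"
  shows "z \<in> lp_space p" "lp_sum p z \<le> 2 powr p * (lp_sum p u + lp_sum p v)"
  using lp_sum_triangle_scaled[of u p v 1 z] assms by simp_all

lemma lp_sum_mult_diff_le:
  assumes u: "(\<lambda>m. u m - c * v m) \<in> lp_space p" and v: "(\<lambda>m. v m - z m) \<in> lp_space p"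
    and p: "0 < p"
  shows "lp_sum p (\<lambda>m. u m - c * z m)
    \<le> (2 * (1 + norm c)) powr p * (lp_sum p (\<lambda>m. u m - c * v m) + lp_sum p (\<lambda>m. v m - z m))"
proof (rule lp_sum_triangle_scaled(2)[OF u v p])
  fix m
  have "norm (u m - c * z m) = norm ((u m - c * v m) + c * (v m - z m))"
    by (simp add: algebra_simps)
  also have "\<dots> \<le> norm (u m - c * v m) + norm c * norm (v m - z m)"
    by (metis norm_mult norm_triangle_ineq)
  also have "\<dots> \<le> (1 + norm c) * (norm (u m - c * v m) + norm (v m - z m))"
    by (simp add: algebra_simps)
  finally show "norm (u m - c * z m) \<le> (1 + norm c) * (norm (u m - c * v m) + norm (v m - z m))" .
qed simp

lemma lp_space_add:
  "u \<in> lp_space p \<Longrightarrow> v \<in> lp_space p \<Longrightarrow> 0 < p \<Longrightarrow> (\<lambda>m. u m + v m) \<in> lp_space p"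
  by (rule lp_sum_triangle(1)[of u p v]) (auto intro: norm_triangle_ineq)

lemma lp_space_diff:
  "u \<in> lp_space p \<Longrightarrow> v \<in> lp_space p \<Longrightarrow> 0 < p \<Longrightarrow> (\<lambda>m. u m - v m) \<in> lp_space p"
  by (rule lp_sum_triangle(1)[of u p v]) (auto intro: norm_triangle_ineq4)

lemma lp_space_mult:
  "u \<in> lp_space p \<Longrightarrow> 0 < p \<Longrightarrow> (\<lambda>m. c * u m) \<in> lp_space p"
  by (rule lp_sum_dominated(1)[of u p "norm c"]) (auto simp: norm_mult)

lemma lp_space_sum:
  fixes L :: nat
  assumes "\<And>j. u j \<in> lp_space p" "0 < p"
  shows "(\<lambda>m. \<Sum>j<L. c j * u j m) \<in> lp_space p"
proof (induction L)
  case 0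
  then show ?case by (simp add: lp_space_iff)
next
  case (Suc L)
  then show ?case
    using lp_space_add[OF Suc lp_space_mult[OF assms(1)[of L] assms(2)] assms(2)] by simp
qed

lemma lp_space_finite_support:
  assumes "\<And>m. K \<le> m \<Longrightarrow> u m = 0"
  shows "u \<in> lp_space p"
  unfolding lp_space_iff
  by (rule summable_comparison_test'[of "\<lambda>_. 0" K]) (auto simp: assms)

lemma lp_space_tail:
  "u \<in> lp_space p \<Longrightarrow> 0 < p \<Longrightarrow> (\<lambda>m. if m < K then 0 else u m) \<in> lp_space p"
  by (rule lp_sum_dominated(1)[of u p 1]) auto

lemma eventually_lp_sum_tail_less:
  assumes u: "u \<in> lp_space p" and e: "0 < e"
  shows "eventually (\<lambda>K. lp_sum p (\<lambda>m. if m < K then 0 else u m) < e) sequentially"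
proof -
  have sums: "summable (\<lambda>m. norm (u m) powr p)"
    using u by (simp add: lp_space_iff)
  obtain K0 where K0: "\<And>K. K0 \<le> K \<Longrightarrow> norm (\<Sum>i. norm (u (i + K)) powr p) < e"
    using suminf_exist_split[OF e sums] by auto
  have "lp_sum p (\<lambda>m. if m < K then 0 else u m) = (\<Sum>i. norm (u (i + K)) powr p)" for K
  proof -
    have "(\<lambda>i. norm (u (i + K)) powr p) sums (\<Sum>i. norm (u (i + K)) powr p)"
      using summable_ignore_initial_segment[OF sums, of K] by (simp add: summable_sums)
    then have "(\<lambda>i. norm (if i < K then 0 else u i) powr p) sums (\<Sum>i. norm (u (i + K)) powr p)"
      using sums_zero_iff_shift[of K "\<lambda>i. norm (if i < K then 0 else u i) powr p"] by simp
    then show ?thesis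
      by (simp add: lp_sum_def sums_iff)
  qed
  then show ?thesis
    unfolding eventually_sequentially using K0 by fastforce
qed

lemma norm_less_of_lp_sum_less:
  assumes "u \<in> lp_space p" "0 < p" "0 \<le> b" "lp_sum p u < b powr p"
  shows "norm (u k) < b"
proof (rule ccontr)
  assume "\<not> norm (u k) < b"
  then have "b powr p \<le> norm (u k) powr p"
    using assms(2,3) by (intro powr_mono2) auto
  also have "\<dots> = (\<Sum>m\<in>{k}. norm (u m) powr p)"
    by simp
  also have "\<dots> \<le> lp_sum p u"
    unfolding lp_sum_def using assms(1) by (intro sum_le_suminf) (auto simp: lp_space_iff)
  finally show False
    using assms(4) by simp
qed

lemma lp_space_single: "(\<lambda>m. if m = k then \<beta> else 0) \<in> lp_space p"
  by (rule lp_space_finite_support[of "Suc k"]) auto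

lemma lp_sum_single: "lp_sum p (\<lambda>m. if m = k then \<beta> else 0) = norm \<beta> powr p"
proof -
  have "(\<lambda>m. norm (if m = k then \<beta> else 0) powr p) = (\<lambda>m. if m = k then norm \<beta> powr p else 0)"
    by auto
  then show ?thesis
    using sums_single[of k "\<lambda>_. norm \<beta> powr p"] by (simp add: lp_sum_def sums_iff)
qed

lemma lp_sum_near_spike:
  assumes u: "(\<lambda>m. u m - (if m = k then \<beta> else 0)) \<in> lp_space p" and p: "0 < p"
    and less: "lp_sum p (\<lambda>m. u m - (if m = k then \<beta> else 0)) < (norm \<beta> / 2) powr p"
  shows "norm \<beta> / 2 < norm (u k)" "lp_sum p u < 2 * (2 * norm \<beta>) powr p"
proof -
  have "norm (u k - \<beta>) < norm \<beta> / 2"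
    using norm_less_of_lp_sum_less[OF u p _ less, of k] by simp
  then show "norm \<beta> / 2 < norm (u k)"
    using norm_triangle_ineq4[of "u k" "u k - \<beta>"] by simp
  have "lp_sum p u
      \<le> 2 powr p * (lp_sum p (\<lambda>m. u m - (if m = k then \<beta> else 0))
                    + lp_sum p (\<lambda>m. if m = k then \<beta> else 0))"
    using norm_triangle_sub[of "u _" "if _ = k then \<beta> else 0"]
    by (intro lp_sum_triangle(2)[OF u lp_space_single p]) (simp add: add.commute)
  also have "\<dots> < 2 powr p * (norm \<beta> powr p + norm \<beta> powr p)"
  proof -
    have "(norm \<beta> / 2) powr p \<le> norm \<beta> powr p"
      using p by (intro powr_mono2) auto
    then show ?thesis
      using less lp_sum_single[of p k \<beta>] by (intro mult_strict_left_mono) auto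
  qed
  also have "\<dots> = 2 * (2 * norm \<beta>) powr p"
    by (simp add: powr_mult)
  finally show "lp_sum p u < 2 * (2 * norm \<beta>) powr p" .
qed

lemma lp_space_tendsto_zero:
  assumes "u \<in> lp_space p" "0 < p"
  shows "u \<longlonglongrightarrow> 0"
proof -
  have "(\<lambda>m. norm (u m) powr p) \<longlonglongrightarrow> 0"
    using assms by (intro summable_LIMSEQ_zero) (simp add: lp_space_iff)
  then have "(\<lambda>m. (norm (u m) powr p) powr (1/p)) \<longlonglongrightarrow> 0"
    by (rule tendsto_zero_powrI[OF _ tendsto_const]) (use assms in auto)
  also have "(\<lambda>m. (norm (u m) powr p) powr (1/p)) = (\<lambda>m. norm (u m))"
    using assms by (simp add: powr_powr)
  finally show ?thesis
    by (simp add: tendsto_norm_zero_iff)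
qed

lemma lp_space_small_coordinate:
  fixes R :: nat
  assumes "\<And>n. n < R \<Longrightarrow> u n \<in> lp_space p" "0 < p" "0 < b"
  obtains M where "\<And>n. n < R \<Longrightarrow> norm (u n M) < b"
proof -
  have "eventually (\<lambda>m. norm (u n m) < b) sequentially" if "n < R" for n
    using order_tendstoD(2)[OF tendsto_norm_zero[OF lp_space_tendsto_zero[OF assms(1)[OF that] assms(2)]]]
      assms(3) by simp
  then have "eventually (\<lambda>m. \<forall>n\<in>{..<R}. norm (u n m) < b) sequentially"
    by (intro eventually_ball_finite) auto
  then show ?thesis
    using that unfolding eventually_sequentially by blast
qed

lemma lp_space_reindex:
  assumes u: "u \<in> lp_space p" and g: "strict_mono g"
  shows "(\<lambda>m. u (g m)) \<in> lp_space p"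
  unfolding lp_space_iff
proof (rule summableI_nonneg_bounded[where x = "lp_sum p u"])
  fix n
  have "(\<Sum>i<n. norm (u (g i)) powr p) = (\<Sum>m\<in>g ` {..<n}. norm (u m) powr p)"
    using strict_mono_imp_inj_on[OF g] by (simp add: sum.reindex)
  also have "\<dots> \<le> lp_sum p u"
    unfolding lp_sum_def using u by (intro sum_le_suminf) (auto simp: lp_space_iff)
  finally show "(\<Sum>i<n. norm (u (g i)) powr p) \<le> lp_sum p u" .
qed auto

section \<open>Pseudo-shifts\<close>

primrec shift_weight :: "(nat \<Rightarrow> nat) \<Rightarrow> (nat \<Rightarrow> 'a::real_normed_field) \<Rightarrow> nat \<Rightarrow> nat \<Rightarrow> 'a" where
  "shift_weight f w 0 m = 1"
| "shift_weight f w (Suc n) m = w (f m) * shift_weight f w n (f m)"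

lemma pseudo_shift_funpow:
  "(pseudo_shift f w ^^ n) v m = shift_weight f w n m * v ((f ^^ n) m)"
proof (induction n arbitrary: m)
  case 0
  then show ?case by simp
next
  case (Suc n)
  have "(pseudo_shift f w ^^ Suc n) v m = w (f m) * (pseudo_shift f w ^^ n) v (f m)"
    by (simp add: pseudo_shift_def)
  also have "\<dots> = shift_weight f w (Suc n) m * v ((f ^^ Suc n) m)"
    using Suc by (simp add: funpow_Suc_right del: funpow.simps)
  finally show ?case .
qed

lemma strict_mono_less_self:
  fixes f :: "nat \<Rightarrow> nat"
  assumes "strict_mono f" "0 < f 0"
  shows "m < f m"
proof (induction m)
  case 0
  then show ?case using assms by simp
next
  case (Suc m)
  then show ?case using strict_monoD[OF assms(1), of m "Suc m"] by simp
qed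

lemma strict_mono_funpow_ge:
  fixes f :: "nat \<Rightarrow> nat"
  assumes "strict_mono f" "0 < f 0"
  shows "m + n \<le> (f ^^ n) m"
proof (induction n)
  case 0
  then show ?case by simp
next
  case (Suc n)
  then show ?case using strict_mono_less_self[OF assms, of "(f ^^ n) m"] by simp
qed

lemma pseudo_shift_lp_space:
  assumes d: "pseudo_shift_data f w" and v: "v \<in> lp_space p" and p: "0 < p"
  shows "pseudo_shift f w v \<in> lp_space p"
proof -
  obtain B where B: "\<And>m. norm (w (f m)) \<le> B"
    using d unfolding pseudo_shift_data_def bounded_iff by auto
  have "0 \<le> B"
    using order_trans[OF norm_ge_zero B] .
  moreover have "(\<lambda>m. v (f m)) \<in> lp_space p"
    using lp_space_reindex[OF v] d by (simp add: pseudo_shift_data_def)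
  moreover have "norm (pseudo_shift f w v m) \<le> B * norm (v (f m))" for m
    unfolding pseudo_shift_def norm_mult by (intro mult_right_mono B) simp
  ultimately show ?thesis
    using lp_sum_dominated(1)[OF _ p] by blast
qed

section \<open>d-hypercyclic vectors\<close>

lemma funpow_lp_space:
  fixes T :: "(nat \<Rightarrow> 'a::real_normed_field) \<Rightarrow> nat \<Rightarrow> 'a"
  assumes "\<And>v. v \<in> lp_space p \<Longrightarrow> T v \<in> lp_space p" "v \<in> lp_space p"
  shows "(T ^^ n) v \<in> lp_space p"
proof (induction n)
  case 0
  then show ?case using assms(2) by simp
next
  case (Suc n)
  then show ?case using assms(1) by simp
qed

lemma d_hypercyclic_vector_lp_sum:
  fixes T :: "nat \<Rightarrow> (nat \<Rightarrow> 'a::real_normed_field) \<Rightarrow> nat \<Rightarrow> 'a"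
  assumes hc: "d_hypercyclic_vector p N T x" and p: "0 < p"
    and T: "\<And>i v. i < N \<Longrightarrow> v \<in> lp_space p \<Longrightarrow> T i v \<in> lp_space p"
    and t: "\<And>i. i < N \<Longrightarrow> t i \<in> lp_space p" and \<delta>: "0 < \<delta>"
  shows "\<exists>n. \<forall>i<N. lp_sum p (\<lambda>m. (T i ^^ n) x m - t i m) < \<delta>"
proof -
  have x: "x \<in> lp_space p"
    using hc by (simp add: d_hypercyclic_vector_def)
  have \<epsilon>: "0 < \<delta> powr (1/p)"
    using \<delta> by simp
  then obtain n where n: "\<And>i. i < N \<Longrightarrow> lp_norm p (\<lambda>m. (T i ^^ n) x m - t i m) < \<delta> powr (1/p)"
    using hc t unfolding d_hypercyclic_vector_def by blast
  have "lp_sum p (\<lambda>m. (T i ^^ n) x m - t i m) < \<delta>" if i: "i < N" for i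
  proof -
    have "(\<lambda>m. (T i ^^ n) x m - t i m) \<in> lp_space p"
      using lp_space_diff[OF funpow_lp_space[OF T[OF i] x] t[OF i] p] .
    then have "lp_sum p (\<lambda>m. (T i ^^ n) x m - t i m) < (\<delta> powr (1/p)) powr p"
      using n[OF i] lp_norm_less_iff[OF _ \<epsilon> p] by blast
    then show ?thesis
      using \<delta> p by (simp add: powr_powr)
  qed
  then show ?thesis by blast
qed

lemma d_hypercyclic_vector_lp_sumI:
  fixes T :: "nat \<Rightarrow> (nat \<Rightarrow> 'a::real_normed_field) \<Rightarrow> nat \<Rightarrow> 'a"
  assumes x: "x \<in> lp_space p" and p: "0 < p"
    and T: "\<And>i v. i < N \<Longrightarrow> v \<in> lp_space p \<Longrightarrow> T i v \<in> lp_space p"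
    and hits: "\<And>t \<delta>. (\<And>i. i < N \<Longrightarrow> t i \<in> lp_space p) \<Longrightarrow> 0 < \<delta> \<Longrightarrow>
      \<exists>n. \<forall>i<N. lp_sum p (\<lambda>m. (T i ^^ n) x m - t i m) < \<delta>"
  shows "d_hypercyclic_vector p N T x"
  unfolding d_hypercyclic_vector_def
proof (intro conjI x allI impI)
  fix t :: "nat \<Rightarrow> nat \<Rightarrow> 'a" and \<epsilon> :: real
  assume t: "\<forall>i<N. t i \<in> lp_space p" and \<epsilon>: "0 < \<epsilon>"
  then obtain n where n: "\<And>i. i < N \<Longrightarrow> lp_sum p (\<lambda>m. (T i ^^ n) x m - t i m) < \<epsilon> powr p"
    using hits[of t "\<epsilon> powr p"] by auto
  have "lp_norm p (\<lambda>m. (T i ^^ n) x m - t i m) < \<epsilon>" if i: "i < N" for i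
  proof -
    have "(\<lambda>m. (T i ^^ n) x m - t i m) \<in> lp_space p"
      using lp_space_diff[OF funpow_lp_space[where T = "T i", OF T[OF i] x] _ p] t i by blast
    then show ?thesis
      using lp_norm_less_iff[OF _ \<epsilon> p] n[OF i] by blast
  qed
  then show "\<exists>n. \<forall>i<N. lp_norm p (\<lambda>m. (T i ^^ n) x m - t i m) < \<epsilon>"
    by blast
qed

text \<open>Perturb the first target by a spike at a coordinate where the first R orbit points are
  already close to it: no hit of the perturbed targets can then happen before time R.\<close>

lemma d_hypercyclic_vector_lp_sum_late:
  fixes T :: "nat \<Rightarrow> (nat \<Rightarrow> 'a::real_normed_field) \<Rightarrow> nat \<Rightarrow> 'a"
  assumes hc: "d_hypercyclic_vector p N T x" and p: "0 < p"
    and T: "\<And>i v. i < N \<Longrightarrow> v \<in> lp_space p \<Longrightarrow> T i v \<in> lp_space p"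
    and t: "\<And>i. i < N \<Longrightarrow> t i \<in> lp_space p" and \<delta>: "0 < \<delta>"
  shows "\<exists>n\<ge>R. \<forall>i<N. lp_sum p (\<lambda>m. (T i ^^ n) x m - t i m) < \<delta>"
proof (cases "N = 0")
  case True
  then show ?thesis by auto
next
  case False
  then have N: "0 < N" by simp
  define u where "u n = (\<lambda>m. (T 0 ^^ n) x m - t 0 m)" for n
  have u: "u n \<in> lp_space p" for n
    using hc lp_space_diff[OF funpow_lp_space[OF T[OF N]] t[OF N] p]
    by (simp add: u_def d_hypercyclic_vector_def)
  define b where "b = (\<delta> / 2) powr (1/p) / 2"
  have b: "0 < b" "2 * (2 * b) powr p = \<delta>"
    using \<delta> p by (simp_all add: b_def powr_powr)
  obtain M where M: "\<And>n. n < R \<Longrightarrow> norm (u n M) < b / 2"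
    by (rule lp_space_small_coordinate[of R u p "b / 2"]) (use u p b(1) in auto)
  define t' where
    "t' i = (if i = 0 then (\<lambda>m. t 0 m + (if m = M then of_real b else 0)) else t i)" for i
  have t': "t' i \<in> lp_space p" if "i < N" for i
    using lp_space_add[OF t[OF N] lp_space_single p] t[OF that] by (simp add: t'_def)
  define d where "d = min \<delta> ((b / 2) powr p)"
  have "\<exists>n. \<forall>i<N. lp_sum p (\<lambda>m. (T i ^^ n) x m - t' i m) < d"
    using \<delta> b(1) by (intro d_hypercyclic_vector_lp_sum[OF hc p]) (auto simp: T t' d_def)
  then obtain n where n: "\<And>i. i < N \<Longrightarrow> lp_sum p (\<lambda>m. (T i ^^ n) x m - t' i m) < d"
    by blast
  have "(\<lambda>m. u n m - (if m = M then of_real b else 0)) \<in> lp_space p"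
    "lp_sum p (\<lambda>m. u n m - (if m = M then of_real b else 0)) < (norm (of_real b :: 'a) / 2) powr p"
    using lp_space_diff[OF u lp_space_single p] n[OF N] b(1)
    by (simp_all add: u_def t'_def diff_diff_eq d_def)
  note near_spike = lp_sum_near_spike[OF this(1) p this(2)]
  have "lp_sum p (u n) < \<delta>"
    using near_spike(2) b by simp
  then have "lp_sum p (\<lambda>m. (T i ^^ n) x m - t i m) < \<delta>" if "i < N" for i
    using n[OF that] by (cases "i = 0") (simp_all add: u_def t'_def d_def)
  moreover have "R \<le> n"
    using near_spike(1) M[of n] b(1) by force
  ultimately show ?thesis
    by blast
qed

lemma dense_d_hypercyclic_manifold_imp_d_hypercyclic:
  fixes T :: "nat \<Rightarrow> (nat \<Rightarrow> 'a::real_normed_field) \<Rightarrow> nat \<Rightarrow> 'a"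
  assumes M: "dense_d_hypercyclic_manifold p N T M" and p: "0 < p"
  shows "d_hypercyclic p N T"
proof -
  define e0 :: "nat \<Rightarrow> 'a" where "e0 = (\<lambda>m. if m = 0 then 1 else 0)"
  have "e0 \<in> lp_space p"
    unfolding e0_def by (rule lp_space_single)
  then obtain v where v: "v \<in> M" "lp_norm p (\<lambda>m. v m - e0 m) < 1"
    using M unfolding dense_d_hypercyclic_manifold_def by (meson zero_less_one)
  have "v \<noteq> (\<lambda>m. 0)"
  proof
    assume "v = (\<lambda>m. 0)"
    then have diff: "(\<lambda>m. v m - e0 m) = (\<lambda>m. if m = 0 then - 1 else 0)"
      by (auto simp: e0_def)
    have "lp_sum p (\<lambda>m. v m - e0 m) < 1"
      using v(2) lp_norm_less_iff[OF lp_space_single zero_less_one p, of 0 "- 1 :: 'a"] by (simp add: diff)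
    then show False
      using lp_sum_single[of p 0 "- 1 :: 'a"] by (simp add: diff)
  qed
  then show ?thesis
    using M v(1) unfolding dense_d_hypercyclic_manifold_def d_hypercyclic_def by blast
qed

section \<open>The dense d-hypercyclic manifold\<close>

definition stage_index :: "nat \<Rightarrow> nat" where
  "stage_index s = fst (prod_decode s)"

definition stage_power :: "nat \<Rightarrow> nat" where
  "stage_power s = fst (prod_decode (snd (prod_decode s)))"

definition stage_tol :: "nat \<Rightarrow> real" where
  "stage_tol s = 1 / (real (snd (prod_decode (snd (prod_decode s)))) + 1)"

lemma stage_tol_pos: "0 < stage_tol s"
  by (simp add: stage_tol_def)

lemma fst_prod_decode_le: "fst (prod_decode s) \<le> s"
  by (metis le_prod_encode_1 prod.collapse prod_decode_inverse)

lemma stage_index_le: "stage_index s \<le> s"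
  unfolding stage_index_def by (rule fst_prod_decode_le)

lemma exists_stage:
  assumes "0 < \<eta>"
  shows "\<exists>s\<ge>L. stage_index s = j \<and> stage_power s = J \<and> stage_tol s < \<eta>"
proof -
  obtain r :: nat where r: "1 / \<eta> < real r" "L \<le> r"
    by (metis reals_Archimedean2 max.cobounded1 max.cobounded2 of_nat_le_iff order_less_le_trans)
  define s where "s = prod_encode (j, prod_encode (J, r))"
  have "L \<le> s"
    using r(2) le_prod_encode_2[of r J] le_prod_encode_2[of "prod_encode (J, r)" j]
    by (simp add: s_def)
  moreover have "stage_tol s < \<eta>"
  proof -
    have "1 / \<eta> < real r + 1"
      using r(1) by simp
    then show ?thesis
      using assms by (simp add: s_def stage_tol_def field_simps)
  qed
  ultimately show ?thesis
    by (intro exI[of _ s]) (simp add: s_def stage_index_def stage_power_def)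
qed

locale pseudo_shift_d_hypercyclic =
  fixes p :: real and N :: nat and f :: "nat \<Rightarrow> nat \<Rightarrow> nat"
    and w :: "nat \<Rightarrow> nat \<Rightarrow> 'a::real_normed_field" and x :: "nat \<Rightarrow> 'a"
  assumes p_pos: "0 < p"
    and data: "\<And>i. i < N \<Longrightarrow> pseudo_shift_data (f i) (w i)"
    and hc: "d_hypercyclic_vector p N (\<lambda>i. pseudo_shift (f i) (w i)) x"
begin

abbreviation T :: "nat \<Rightarrow> (nat \<Rightarrow> 'a) \<Rightarrow> nat \<Rightarrow> 'a" where
  "T i \<equiv> pseudo_shift (f i) (w i)"

lemma x_lp_space: "x \<in> lp_space p"
  using hc by (simp add: d_hypercyclic_vector_def)

lemma T_lp_space: "i < N \<Longrightarrow> v \<in> lp_space p \<Longrightarrow> T i v \<in> lp_space p"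
  using pseudo_shift_lp_space[OF data _ p_pos] by blast

lemma orbit_lp_space: "i < N \<Longrightarrow> v \<in> lp_space p \<Longrightarrow> (T i ^^ n) v \<in> lp_space p"
  by (rule funpow_lp_space) (use T_lp_space in auto)

lemma f_funpow_ge: "i < N \<Longrightarrow> m + n \<le> (f i ^^ n) m"
  using strict_mono_funpow_ge data by (simp add: pseudo_shift_data_def)

definition cut_length :: "nat \<Rightarrow> nat" where
  "cut_length s = (SOME K. \<forall>i<N.
     lp_sum p (\<lambda>m. if m < K then 0 else (T i ^^ stage_power s) x m) < stage_tol s)"

lemma cut_length_tail:
  assumes "i < N"
  shows "lp_sum p (\<lambda>m. if m < cut_length s then 0 else (T i ^^ stage_power s) x m) < stage_tol s"
proof -
  have "eventually (\<lambda>K. \<forall>i\<in>{..<N}.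
      lp_sum p (\<lambda>m. if m < K then 0 else (T i ^^ stage_power s) x m) < stage_tol s) sequentially"
    by (intro eventually_ball_finite ballI eventually_lp_sum_tail_less orbit_lp_space x_lp_space
        stage_tol_pos) auto
  then have "\<exists>K. \<forall>i<N. lp_sum p (\<lambda>m. if m < K then 0 else (T i ^^ stage_power s) x m) < stage_tol s"
    unfolding eventually_sequentially by blast
  from someI_ex[OF this] show ?thesis
    using assms by (simp add: cut_length_def)
qed

definition stage_target :: "nat \<Rightarrow> nat \<Rightarrow> nat \<Rightarrow> 'a" where
  "stage_target s i m = (if m < cut_length s then (T i ^^ stage_power s) x m else 0)"

lemma stage_target_lp_space: "stage_target s i \<in> lp_space p"
  by (rule lp_space_finite_support[of "cut_length s"]) (simp add: stage_target_def)

definition hitting_time :: "nat \<Rightarrow> nat \<Rightarrow> nat" where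
  "hitting_time s R = (SOME n. R \<le> n \<and>
     (\<forall>i<N. lp_sum p (\<lambda>m. (T i ^^ n) x m - stage_target s i m) < stage_tol s))"

lemma hitting_time:
  shows "R \<le> hitting_time s R"
    and "i < N \<Longrightarrow> lp_sum p (\<lambda>m. (T i ^^ hitting_time s R) x m - stage_target s i m) < stage_tol s"
proof -
  have "\<exists>n\<ge>R. \<forall>i<N. lp_sum p (\<lambda>m. (T i ^^ n) x m - stage_target s i m) < stage_tol s"
    by (rule d_hypercyclic_vector_lp_sum_late[OF hc p_pos])
      (use T_lp_space stage_target_lp_space stage_tol_pos in auto)
  then have "R \<le> hitting_time s R \<and>
      (\<forall>i<N. lp_sum p (\<lambda>m. (T i ^^ hitting_time s R) x m - stage_target s i m) < stage_tol s)"
    unfolding hitting_time_def by (rule someI_ex)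
  then show "R \<le> hitting_time s R"
    and "i < N \<Longrightarrow> lp_sum p (\<lambda>m. (T i ^^ hitting_time s R) x m - stage_target s i m) < stage_tol s"
    by auto
qed

definition block_end :: "nat \<Rightarrow> nat \<Rightarrow> nat" where
  "block_end s n = n + (\<Sum>i<N. \<Sum>m<cut_length s. (f i ^^ n) m)"

primrec stage_time :: "nat \<Rightarrow> nat" where
  "stage_time 0 = hitting_time 0 0"
| "stage_time (Suc s) = hitting_time (Suc s) (Suc (block_end s (stage_time s)))"

lemma stage_time_hits: "i < N \<Longrightarrow> lp_sum p (\<lambda>m. (T i ^^ stage_time s) x m - stage_target s i m) < stage_tol s"
  by (cases s) (simp_all add: hitting_time(2))

lemma block_end_less_stage_time_Suc: "block_end s (stage_time s) < stage_time (Suc s)"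
  using hitting_time(1)[of "Suc (block_end s (stage_time s))" "Suc s"] by simp

lemma strict_mono_stage_time: "strict_mono stage_time"
  unfolding strict_mono_Suc_iff
  using block_end_less_stage_time_Suc by (auto simp: block_end_def intro: le_less_trans[OF le_add1])

lemma block_end_less_stage_time:
  assumes "s < s'"
  shows "block_end s (stage_time s) < stage_time s'"
proof -
  have "stage_time (Suc s) \<le> stage_time s'"
    using assms strict_mono_stage_time by (metis Suc_leI strict_mono_less_eq)
  then show ?thesis
    using block_end_less_stage_time_Suc[of s] by simp
qed

definition stage_block :: "nat \<Rightarrow> nat set" where
  "stage_block s = {stage_time s .. block_end s (stage_time s)}"

lemma stage_block_disjoint:
  assumes "q \<in> stage_block s" "q \<in> stage_block s'"
  shows "s = s'"
  using assms block_end_less_stage_time[of s s'] block_end_less_stage_time[of s' s]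
  by (cases s s' rule: linorder_cases) (auto simp: stage_block_def)

lemma funpow_in_stage_block:
  assumes i: "i < N" and m: "m < cut_length s"
  shows "(f i ^^ stage_time s) m \<in> stage_block s"
proof -
  have "(f i ^^ stage_time s) m \<le> (\<Sum>m<cut_length s. (f i ^^ stage_time s) m)"
    using m by (intro member_le_sum) auto
  also have "\<dots> \<le> (\<Sum>i<N. \<Sum>m<cut_length s. (f i ^^ stage_time s) m)"
    using i by (intro member_le_sum[where f = "\<lambda>i. \<Sum>m<cut_length s. (f i ^^ stage_time s) m"]) auto
  finally show ?thesis
    using f_funpow_ge[OF i, of m "stage_time s"] by (auto simp: stage_block_def block_end_def)
qed

definition selector :: "nat \<Rightarrow> nat \<Rightarrow> 'a" where
  "selector j q = (if \<exists>s. stage_index s = j \<and> q \<in> stage_block s then 1 else 0)"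

lemma selector_stage_block:
  assumes "q \<in> stage_block s"
  shows "selector j q = (if j = stage_index s then 1 else 0)"
proof -
  have "(\<exists>s'. stage_index s' = j \<and> q \<in> stage_block s') \<longleftrightarrow> j = stage_index s"
    using assms stage_block_disjoint[OF assms] by blast
  then show ?thesis
    by (simp add: selector_def)
qed

lemma norm_selector_le: "norm (selector j q) \<le> 1"
  by (simp add: selector_def)

lemma selector_below_stage_time:
  assumes "q < stage_time j"
  shows "selector j q = 0"
proof (rule ccontr)
  assume "selector j q \<noteq> 0"
  then obtain s where s: "stage_index s = j" "q \<in> stage_block s"
    unfolding selector_def by (auto split: if_splits)
  have "stage_time j \<le> stage_time s"
    using stage_index_le[of s] s(1) strict_mono_stage_time by (simp add: strict_mono_less_eq)
  then show False
    using s(2) assms by (simp add: stage_block_def)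
qed

lemma norm_selector_sum_le: "norm (\<Sum>k<L. a k * selector (h k) q) \<le> (\<Sum>k<L. norm (a k))"
  using norm_sum[of _ "{..<L}"]
  by (rule order_trans, intro sum_mono) (auto simp: norm_mult intro: mult_left_le norm_selector_le)

definition generator :: "nat \<Rightarrow> nat \<Rightarrow> 'a" where
  "generator j m = (if m = fst (prod_decode j) then 1 else 0) + x m * selector j m"

lemma generator_lp_space: "generator j \<in> lp_space p"
proof -
  have "(\<lambda>m. x m * selector j m) \<in> lp_space p"
    by (rule lp_sum_dominated(1)[OF x_lp_space p_pos, of 1])
      (auto simp: norm_mult intro: mult_left_le norm_selector_le)
  then show ?thesis
    unfolding generator_def by (intro lp_space_add[OF lp_space_single _ p_pos])
qed

text \<open>The coefficients are required to vanish from \<open>L\<close> on, so that \<open>a j\<close> is the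
  coefficient of \<open>generator j\<close> for every \<open>j\<close>, not only for \<open>j < L\<close>.\<close>

definition manifold :: "(nat \<Rightarrow> 'a) set" where
  "manifold = {(\<lambda>m. \<Sum>j<L. a j * generator j m) | a L. \<forall>j\<ge>L. a j = 0}"

lemma in_manifoldI: "\<forall>j\<ge>L. a j = 0 \<Longrightarrow> (\<lambda>m. \<Sum>j<L. a j * generator j m) \<in> manifold"
  unfolding manifold_def by blast

lemma manifoldE:
  assumes "v \<in> manifold"
  obtains a L where "\<forall>j\<ge>L. a j = 0" "v = (\<lambda>m. \<Sum>j<L. a j * generator j m)"
  using assms unfolding manifold_def by blast

lemma manifold_lp_space: "v \<in> manifold \<Longrightarrow> v \<in> lp_space p"
  by (auto elim: manifoldE intro: lp_space_sum generator_lp_space p_pos)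

lemma zero_in_manifold: "(\<lambda>m. 0) \<in> manifold"
  using in_manifoldI[of 0 "\<lambda>_. 0"] by simp

lemma sum_extend_zero:
  fixes a :: "nat \<Rightarrow> 'a"
  assumes "\<forall>j\<ge>L. a j = 0" "L \<le> L'"
  shows "(\<Sum>j<L'. a j * h j) = (\<Sum>j<L. a j * h j)"
  using assms by (intro sum.mono_neutral_right) auto

lemma manifold_add:
  assumes "u \<in> manifold" "v \<in> manifold"
  shows "(\<lambda>m. u m + v m) \<in> manifold"
proof -
  obtain a L where a: "\<forall>j\<ge>L. a j = 0" "u = (\<lambda>m. \<Sum>j<L. a j * generator j m)"
    using assms(1) by (rule manifoldE)
  obtain b L' where b: "\<forall>j\<ge>L'. b j = 0" "v = (\<lambda>m. \<Sum>j<L'. b j * generator j m)"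
    using assms(2) by (rule manifoldE)
  have "(\<lambda>m. u m + v m) = (\<lambda>m. \<Sum>j<L + L'. (a j + b j) * generator j m)"
    using sum_extend_zero[OF a(1), of "L + L'"] sum_extend_zero[OF b(1), of "L + L'"]
    by (simp add: a(2) b(2) distrib_right sum.distrib)
  moreover have "\<forall>j\<ge>L + L'. a j + b j = 0"
    using a(1) b(1) by simp
  ultimately show ?thesis
    using in_manifoldI[of "L + L'" "\<lambda>j. a j + b j"] by simp
qed

lemma manifold_mult:
  assumes "v \<in> manifold"
  shows "(\<lambda>m. c * v m) \<in> manifold"
proof -
  obtain a L where a: "\<forall>j\<ge>L. a j = 0" "v = (\<lambda>m. \<Sum>j<L. a j * generator j m)"
    using assms by (rule manifoldE)
  have "(\<lambda>m. c * v m) = (\<lambda>m. \<Sum>j<L. (c * a j) * generator j m)"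
    by (simp add: a(2) sum_distrib_left mult.assoc)
  moreover have "\<forall>j\<ge>L. c * a j = 0"
    using a(1) by simp
  ultimately show ?thesis
    using in_manifoldI[of L "\<lambda>j. c * a j"] by simp
qed

lemma generator_in_manifold: "generator j \<in> manifold"
proof -
  have "generator j = (\<lambda>m. \<Sum>i<Suc j. (if i = j then 1 else 0) * generator i m)"
    by (simp add: if_distrib cong: if_cong)
  then show ?thesis
    using in_manifoldI[of "Suc j" "\<lambda>i. if i = j then 1 else 0"] by simp
qed

lemma manifold_sum:
  fixes L :: nat
  shows "(\<lambda>m. \<Sum>k<L. c k * generator (h k) m) \<in> manifold"
proof (induction L)
  case 0
  then show ?case using zero_in_manifold by simp
next
  case (Suc L)
  then show ?case
    using manifold_add[OF Suc manifold_mult[OF generator_in_manifold]] by simp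
qed

lemma norm_manifold_near_truncation_le:
  "norm ((\<Sum>k<L. y k * generator (prod_encode (k, l)) m) - (if m < L then y m else 0))
    \<le> (\<Sum>k<L. norm (y k)) * norm (if m < l then 0 else x m)"
proof -
  have "(\<Sum>k<L. y k * (if m = k then 1 else 0)) = (if m < L then y m else 0)"
    by (simp add: if_distrib sum.delta cong: if_cong)
  then have "(\<Sum>k<L. y k * generator (prod_encode (k, l)) m) - (if m < L then y m else 0)
      = x m * (\<Sum>k<L. y k * selector (prod_encode (k, l)) m)"
    by (simp add: generator_def distrib_left sum.distrib sum_distrib_left mult.left_commute)
  moreover have "norm (x m * (\<Sum>k<L. y k * selector (prod_encode (k, l)) m))
      \<le> (\<Sum>k<L. norm (y k)) * norm (if m < l then 0 else x m)"
  proof (cases "m < l")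
    case True
    have "l \<le> stage_time (prod_encode (k, l))" for k
      using le_prod_encode_2[of l k] strict_mono_imp_increasing[OF strict_mono_stage_time]
      by (metis order_trans)
    then have "selector (prod_encode (k, l)) m = 0" for k
      using True by (intro selector_below_stage_time) (meson order_less_le_trans)
    then show ?thesis
      by (simp add: sum_nonneg)
  next
    case False
    then show ?thesis
      using norm_selector_sum_le[where a = y and h = "\<lambda>k. prod_encode (k, l)" and L = L and q = m]
      by (simp add: norm_mult mult.commute mult_left_mono)
  qed
  ultimately show ?thesis
    by simp
qed

lemma manifold_dense:
  assumes y: "y \<in> lp_space p" and \<epsilon>: "0 < \<epsilon>"
  shows "\<exists>v\<in>manifold. lp_norm p (\<lambda>m. v m - y m) < \<epsilon>"
proof -
  define e where "e = \<epsilon> powr p / (2 * 2 powr p)"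
  have e: "0 < e"
    using \<epsilon> by (simp add: e_def)
  obtain L where L: "lp_sum p (\<lambda>m. if m < L then 0 else y m) < e"
    using eventually_lp_sum_tail_less[OF y e] unfolding eventually_sequentially by blast
  define Y where "Y = (\<Sum>k<L. norm (y k))"
  have Y: "0 \<le> Y" "0 < Y powr p + 1"
    using powr_ge_zero[of Y p] by (simp_all add: Y_def sum_nonneg add_nonneg_pos)
  then obtain l where l: "lp_sum p (\<lambda>m. if m < l then 0 else x m) < e / (Y powr p + 1)"
    using eventually_lp_sum_tail_less[OF x_lp_space, of "e / (Y powr p + 1)"] e
    unfolding eventually_sequentially by auto
  define v where "v = (\<lambda>m. \<Sum>k<L. y k * generator (prod_encode (k, l)) m)"
  have x_tail: "(\<lambda>m. if m < l then 0 else x m) \<in> lp_space p"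
    by (rule lp_space_tail[OF x_lp_space p_pos])
  have "norm (v m - (if m < L then y m else 0)) \<le> Y * norm (if m < l then 0 else x m)" for m
    unfolding v_def Y_def by (rule norm_manifold_near_truncation_le)
  note near = lp_sum_dominated[OF x_tail p_pos Y(1) this]
  have near_e: "lp_sum p (\<lambda>m. v m - (if m < L then y m else 0)) < e"
  proof -
    have "lp_sum p (\<lambda>m. v m - (if m < L then y m else 0))
        \<le> (Y powr p + 1) * lp_sum p (\<lambda>m. if m < l then 0 else x m)"
      using near(2) lp_sum_nonneg[OF x_tail] by (simp add: distrib_right)
    also have "\<dots> < e"
      using l Y(2) by (simp add: field_simps)
    finally show ?thesis .
  qed
  have v: "v \<in> manifold"
    unfolding v_def by (rule manifold_sum)
  have "lp_sum p (\<lambda>m. v m - y m)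
      \<le> 2 powr p * (lp_sum p (\<lambda>m. v m - (if m < L then y m else 0))
                    + lp_sum p (\<lambda>m. if m < L then 0 else y m))"
    by (intro lp_sum_triangle(2)[OF near(1) lp_space_tail[OF y p_pos] p_pos])
      (simp add: norm_triangle_ineq4)
  also have "\<dots> < 2 powr p * (e + e)"
    using near_e L by (intro mult_strict_left_mono add_strict_mono) auto
  also have "\<dots> = \<epsilon> powr p"
    by (simp add: e_def)
  finally have "lp_norm p (\<lambda>m. v m - y m) < \<epsilon>"
    using lp_norm_less_iff[OF lp_space_diff[OF manifold_lp_space[OF v] y p_pos] \<epsilon> p_pos] by simp
  then show ?thesis
    using v by blast
qed

lemma manifold_orbit:
  assumes i: "i < N" and n: "L \<le> n"
  shows "(T i ^^ n) (\<lambda>m. \<Sum>j<L. a j * generator j m) m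
    = (T i ^^ n) x m * (\<Sum>j<L. a j * selector j ((f i ^^ n) m))"
proof -
  define q where "q = (f i ^^ n) m"
  have "L \<le> q"
    using f_funpow_ge[OF i, of m n] n by (simp add: q_def)
  then have "q \<noteq> fst (prod_decode j)" if "j < L" for j
    using fst_prod_decode_le[of j] that by linarith
  then have "a j * generator j q = x q * (a j * selector j q)" if "j < L" for j
    using that by (simp add: generator_def)
  then have "(\<Sum>j<L. a j * generator j q) = (\<Sum>j<L. x q * (a j * selector j q))"
    by (intro sum.cong) auto
  then have "(\<Sum>j<L. a j * generator j q) = x q * (\<Sum>j<L. a j * selector j q)"
    by (simp add: sum_distrib_left)
  then show ?thesis
    by (simp add: pseudo_shift_funpow q_def mult.assoc)
qed

lemma selector_sum_stage_block:
  assumes "\<forall>j\<ge>L. a j = 0" "q \<in> stage_block s"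
  shows "(\<Sum>j<L. a j * selector j q) = a (stage_index s)"
  using assms by (simp add: selector_stage_block if_distrib sum.delta cong: if_cong)

lemma norm_coeff_le_sum:
  fixes a :: "nat \<Rightarrow> 'a" and L :: nat
  assumes "\<forall>j\<ge>L. a j = 0"
  shows "norm (a k) \<le> (\<Sum>j<L. norm (a j))"
proof (cases "k < L")
  case True
  then show ?thesis
    by (intro member_le_sum) auto
next
  case False
  then show ?thesis
    using assms by (simp add: sum_nonneg)
qed

lemma norm_stage_orbit_diff_le:
  assumes a: "\<forall>j\<ge>L. a j = 0" and i: "i < N"
  shows "norm ((T i ^^ stage_time s) x m * (\<Sum>j<L. a j * selector j ((f i ^^ stage_time s) m))
            - a (stage_index s) * (T i ^^ stage_power s) x m)
    \<le> (\<Sum>j<L. norm (a j)) * (norm ((T i ^^ stage_time s) x m - stage_target s i m)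
        + norm (if m < cut_length s then 0 else (T i ^^ stage_power s) x m))"
    (is "norm (?u * ?\<psi> - ?c * ?v) \<le> ?A * (norm ?err + norm ?tail)")
proof -
  have c: "norm ?c \<le> ?A"
    by (rule norm_coeff_le_sum[OF a])
  show ?thesis
  proof (cases "m < cut_length s")
    case True
    have "?\<psi> = ?c"
      by (rule selector_sum_stage_block[OF a funpow_in_stage_block[OF i True]])
    then have "?u * ?\<psi> - ?c * ?v = ?c * ?err"
      using True by (simp add: stage_target_def right_diff_distrib mult.commute)
    moreover have "norm ?c * norm ?err \<le> ?A * norm ?err"
      using c by (rule mult_right_mono) simp
    ultimately show ?thesis
      using True by (simp add: norm_mult)
  next
    case False
    then have "?u * ?\<psi> - ?c * ?v = ?\<psi> * ?err - ?c * ?tail"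
      by (simp add: stage_target_def mult.commute)
    then have "norm (?u * ?\<psi> - ?c * ?v) \<le> norm ?\<psi> * norm ?err + norm ?c * norm ?tail"
      using norm_triangle_ineq4[of "?\<psi> * ?err" "?c * ?tail"] by (simp add: norm_mult)
    also have "\<dots> \<le> ?A * (norm ?err + norm ?tail)"
      unfolding distrib_left using c norm_selector_sum_le[where h = "\<lambda>j. j"]
      by (intro add_mono mult_right_mono) auto
    finally show ?thesis .
  qed
qed

lemma manifold_orbit_near_stage:
  assumes a: "\<forall>j\<ge>L. a j = 0" and i: "i < N" and L: "L \<le> stage_time s"
  shows "lp_sum p (\<lambda>m. (T i ^^ stage_time s) (\<lambda>m. \<Sum>j<L. a j * generator j m) m
            - a (stage_index s) * (T i ^^ stage_power s) x m)
    \<le> (2 * (\<Sum>j<L. norm (a j))) powr p * (2 * stage_tol s)"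
proof -
  define err where "err = (\<lambda>m. (T i ^^ stage_time s) x m - stage_target s i m)"
  define tail where "tail = (\<lambda>m. if m < cut_length s then 0 else (T i ^^ stage_power s) x m)"
  have err: "err \<in> lp_space p" "lp_sum p err < stage_tol s"
    unfolding err_def
    using lp_space_diff[OF orbit_lp_space[OF i x_lp_space] stage_target_lp_space p_pos]
      stage_time_hits[OF i] by auto
  have tail: "tail \<in> lp_space p" "lp_sum p tail < stage_tol s"
    unfolding tail_def
    using lp_space_tail[OF orbit_lp_space[OF i x_lp_space] p_pos] cut_length_tail[OF i] by auto
  have "norm ((T i ^^ stage_time s) (\<lambda>m. \<Sum>j<L. a j * generator j m) m
            - a (stage_index s) * (T i ^^ stage_power s) x m)
      \<le> (\<Sum>j<L. norm (a j)) * (norm (err m) + norm (tail m))" for m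
    unfolding manifold_orbit[OF i L] err_def tail_def by (rule norm_stage_orbit_diff_le[OF a i])
  then have "lp_sum p (\<lambda>m. (T i ^^ stage_time s) (\<lambda>m. \<Sum>j<L. a j * generator j m) m
            - a (stage_index s) * (T i ^^ stage_power s) x m)
      \<le> (2 * (\<Sum>j<L. norm (a j))) powr p * (lp_sum p err + lp_sum p tail)"
    by (intro lp_sum_triangle_scaled(2)[OF err(1) tail(1) p_pos] sum_nonneg) auto
  also have "\<dots> \<le> (2 * (\<Sum>j<L. norm (a j))) powr p * (2 * stage_tol s)"
    using err(2) tail(2) by (intro mult_left_mono) auto
  finally show ?thesis .
qed

lemma manifold_orbit_approximates:
  assumes a: "\<forall>j\<ge>L. a j = 0" and \<eta>: "0 < \<eta>"
  shows "\<exists>n. \<forall>i<N. lp_sum p (\<lambda>m. (T i ^^ n) (\<lambda>m. \<Sum>j<L. a j * generator j m) m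
            - a k * (T i ^^ J) x m) < \<eta>"
proof -
  define K where "K = (2 * (\<Sum>j<L. norm (a j))) powr p * 2"
  have K: "0 \<le> K"
    by (simp add: K_def)
  then obtain s where s: "L \<le> s" "stage_index s = k" "stage_power s = J" "stage_tol s < \<eta> / (K + 1)"
    using exists_stage[of "\<eta> / (K + 1)" L k J] \<eta> by auto
  have "L \<le> stage_time s"
    using s(1) strict_mono_imp_increasing[OF strict_mono_stage_time, of s] by simp
  moreover have "K * stage_tol s < \<eta>"
  proof -
    have "K * stage_tol s \<le> (K + 1) * stage_tol s"
      using stage_tol_pos[of s] by (simp add: distrib_right)
    also have "\<dots> < \<eta>"
      using s(4) K by (simp add: field_simps)
    finally show ?thesis .
  qed
  ultimately show ?thesis
    using manifold_orbit_near_stage[OF a] s(2,3) unfolding K_def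
    by (intro exI[of _ "stage_time s"]) (auto simp: mult_ac intro: le_less_trans)
qed

lemma manifold_d_hypercyclic_vector:
  assumes "v \<in> manifold" "v \<noteq> (\<lambda>m. 0)"
  shows "d_hypercyclic_vector p N (\<lambda>i. pseudo_shift (f i) (w i)) v"
proof -
  obtain a L where a: "\<forall>j\<ge>L. a j = 0" and v: "v = (\<lambda>m. \<Sum>j<L. a j * generator j m)"
    using assms(1) by (rule manifoldE)
  obtain k where c: "a k \<noteq> 0"
    using assms(2) v by force
  show ?thesis
  proof (rule d_hypercyclic_vector_lp_sumI[OF manifold_lp_space[OF assms(1)] p_pos T_lp_space])
    fix y :: "nat \<Rightarrow> nat \<Rightarrow> 'a" and \<delta> :: real
    assume y: "\<And>i. i < N \<Longrightarrow> y i \<in> lp_space p" and \<delta>: "0 < \<delta>"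
    define C where "C = (2 * (1 + norm (a k))) powr p"
    have "0 < 2 * (1 + norm (a k))"
      by (simp add: add_pos_nonneg)
    then have C: "0 < C"
      by (simp add: C_def)
    define \<eta> where "\<eta> = \<delta> / (2 * C)"
    have \<eta>: "0 < \<eta>"
      using \<delta> C by (simp add: \<eta>_def)
    define y' where "y' i = (\<lambda>m. inverse (a k) * y i m)" for i
    have y': "y' i \<in> lp_space p" if "i < N" for i
      using lp_space_mult[OF y[OF that] p_pos] by (simp add: y'_def)
    have "\<exists>J. \<forall>i<N. lp_sum p (\<lambda>m. (T i ^^ J) x m - y' i m) < \<eta>"
      by (rule d_hypercyclic_vector_lp_sum[OF hc p_pos]) (use T_lp_space y' \<eta> in auto)
    then obtain J where J: "\<And>i. i < N \<Longrightarrow> lp_sum p (\<lambda>m. (T i ^^ J) x m - y' i m) < \<eta>"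
      by blast
    obtain n where n: "\<And>i. i < N \<Longrightarrow> lp_sum p (\<lambda>m. (T i ^^ n) v m - a k * (T i ^^ J) x m) < \<eta>"
      using manifold_orbit_approximates[OF a \<eta>, of k J] by (auto simp: v)
    have "lp_sum p (\<lambda>m. (T i ^^ n) v m - y i m) < \<delta>" if i: "i < N" for i
    proof -
      have "lp_sum p (\<lambda>m. (T i ^^ n) v m - a k * y' i m)
          \<le> C * (lp_sum p (\<lambda>m. (T i ^^ n) v m - a k * (T i ^^ J) x m)
                  + lp_sum p (\<lambda>m. (T i ^^ J) x m - y' i m))"
        unfolding C_def using orbit_lp_space[OF i] manifold_lp_space[OF assms(1)] x_lp_space y'[OF i]
        by (intro lp_sum_mult_diff_le lp_space_diff lp_space_mult p_pos) auto
      also have "\<dots> < C * (\<eta> + \<eta>)"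
        using n[OF i] J[OF i] C by (intro mult_strict_left_mono add_strict_mono)
      also have "\<dots> = \<delta>"
        using C by (simp add: \<eta>_def)
      finally show ?thesis
        using c by (simp add: y'_def mult.assoc[symmetric])
    qed
    then show "\<exists>n. \<forall>i<N. lp_sum p (\<lambda>m. (T i ^^ n) v m - y i m) < \<delta>"
      by blast
  qed
qed

lemma dense_d_hypercyclic_manifold:
  "dense_d_hypercyclic_manifold p N (\<lambda>i. pseudo_shift (f i) (w i)) manifold"
  unfolding dense_d_hypercyclic_manifold_def
  using manifold_lp_space zero_in_manifold manifold_add manifold_mult manifold_dense
    manifold_d_hypercyclic_vector by blast

end

theorem corollary2p6:
  fixes p :: real and N :: nat
    and f :: "nat \<Rightarrow> nat \<Rightarrow> nat"
    and w :: "nat \<Rightarrow> nat \<Rightarrow> 'a::{real_normed_field, banach}"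
  assumes "1 \<le> p"
    and "N \<ge> 2"
    and "\<And>i. i < N \<Longrightarrow> pseudo_shift_data (f i) (w i)"
  shows "d_hypercyclic p N (\<lambda>i. pseudo_shift (f i) (w i)) \<longleftrightarrow>
         (\<exists>M. dense_d_hypercyclic_manifold p N (\<lambda>i. pseudo_shift (f i) (w i)) M)"
proof
  assume "d_hypercyclic p N (\<lambda>i. pseudo_shift (f i) (w i))"
  then obtain x where "d_hypercyclic_vector p N (\<lambda>i. pseudo_shift (f i) (w i)) x"
    unfolding d_hypercyclic_def by blast
  then interpret pseudo_shift_d_hypercyclic p N f w x
    using assms by unfold_locales auto
  show "\<exists>M. dense_d_hypercyclic_manifold p N (\<lambda>i. pseudo_shift (f i) (w i)) M"
    using dense_d_hypercyclic_manifold by blast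
next
  assume "\<exists>M. dense_d_hypercyclic_manifold p N (\<lambda>i. pseudo_shift (f i) (w i)) M"
  then show "d_hypercyclic p N (\<lambda>i. pseudo_shift (f i) (w i))"
    using dense_d_hypercyclic_manifold_imp_d_hypercyclic assms(1) by fastforce
qed

end
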